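(* Let $0<q<1$ and let $A_q(t)=\sum_{n=0}^{\infty}A_{n,q}\dfrac{t^n}{[n]_q!}$ be a power series, analytic at $t=0$, with $A_q(0)=A_{0,q}\neq 0$. Define the $q$-Appell polynomials $A_{n,q}(x)$ by \[ A_q(t)\,e_q(tx)=\sum_{n=0}^{\infty}A_{n,q}(x)\frac{t^n}{[n]_q!}. \] Assume that \[ t\,\frac{D_{q,t}A_q(t)}{A_q(qt)}=\sum_{n=0}^{\infty}\alpha_n\frac{t^n}{[n]_q!}. \] Then for every positive integer $n$ the polynomial $A_{n,q}(x)$ satisfies the $q$-difference equation \[ \sum_{k=0}^{n}\frac{q^{n-k}\alpha_k}{[k]_q!}D_{q,x}^{k}A_{n,q}(x)+x\,q^{n}D_{q,x}A_{n,q}(x)-[n]_qA_{n,q}(qx)=0, \] i.e. \[ \frac{\alpha_n}{[n]_q!}D_{q,x}^nA_{n,q}(x)+\frac{q\alpha_{n-1}}{[n-1]_q!}D_{q,x}^{n-1}A_{n,q}(x)+\dots+\frac{q^{n-1}\alpha_1}{[1]_q!}D_{q,x}A_{n,q}(x)+\frac{q^n\alpha_0}{[0]_q!}A_{n,q}(x)+xq^nD_{q,x}A_{n,q}(x)-[n]_qA_{n,q}(qx)=0. \]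
   Context: $[n]_q=\frac{1-q^n}{1-q}$, $[0]_q!=1$, $[n]_q!=[n]_q[n-1]_q\cdots[1]_q$. The $q$-exponential is $e_q(t)=\sum_{n=0}^\infty \frac{t^n}{[n]_q!}$. The $q$-derivative is $D_{q,x}f(x)=\frac{f(qx)-f(x)}{(q-1)x}$ (for $x\neq0$; on polynomials/power series $D_{q,x}x^n=[n]_qx^{n-1}$); $D_{q,t}$ is the same operator in the variable $t$, and $D_{q,x}^k$ denotes the $k$-fold iterate ($D_{q,x}^0$ = identity). *)

theory Defs
  imports "HOL-Analysis.Analysis"
begin

definition qint :: "real \<Rightarrow> nat \<Rightarrow> real" where
  "qint q n = (1 - q ^ n) / (1 - q)"

definition qfact :: "real \<Rightarrow> nat \<Rightarrow> real" where
  "qfact q n = (\<Prod>i = 1..n. qint q i)"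

definition qexp :: "real \<Rightarrow> real \<Rightarrow> real" where
  "qexp q t = (\<Sum>n. t ^ n / qfact q n)"

text \<open>q-derivative (f(qx) - f(x))/((q-1)x) for x \<noteq> 0; at x = 0 we use the
  ordinary derivative, which agrees with the convention D_q x^n = [n]_q x^(n-1)
  on polynomials (both give the coefficient of x).\<close>
definition qD :: "real \<Rightarrow> (real \<Rightarrow> real) \<Rightarrow> real \<Rightarrow> real" where
  "qD q f x = (if x = 0 then deriv f 0 else (f (q * x) - f x) / ((q - 1) * x))"

definition qseries :: "real \<Rightarrow> (nat \<Rightarrow> real) \<Rightarrow> real \<Rightarrow> real" where
  "qseries q a t = (\<Sum>n. a n * t ^ n / qfact q n)"

text \<open>q-Appell polynomials, defined by A_q(t) e_q(tx) = sum A_{n,q}(x) t^n/[n]_q!,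
  i.e. by comparing coefficients of t^n in the Cauchy product:
  A_{n,q}(x)/[n]_q! = sum_{k=0}^n (a_k/[k]_q!) (x^(n-k)/[n-k]_q!).\<close>
definition qAppell :: "real \<Rightarrow> (nat \<Rightarrow> real) \<Rightarrow> nat \<Rightarrow> real \<Rightarrow> real" where
  "qAppell q a n x = qfact q n * (\<Sum>k\<le>n. (a k / qfact q k) * (x ^ (n - k) / qfact q (n - k)))"

end

theory Submission
  imports Defs
begin

text \<open>With b_n = a_n/[n]_q! and c_n = \<alpha>_n/[n]_q!, the hypothesis says
  t D_q A_q(t) = A_q(qt) \<Sum> c_n t^n near 0, and comparing coefficients of t^m gives the recursion
  [m]_q b_m = \<Sum>_{k \<le> m} c_k q^{m-k} b_{m-k}. On the other side
  A_{n,q}(x) = [n]_q! \<Sum>_{j \<le> n} b_{n-j} x^j/[j]_q! is a finite sum on which D_q merely lowers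
  the index, so every D_q^k A_{n,q} is explicit. In the difference equation the coefficient of
  x^j/[j]_q! then becomes (q^j [n-j]_q + q^n [j]_q - [n]_q q^j) b_{n-j}, which vanishes identically.\<close>

lemma qint_0 [simp]: "qint q 0 = 0"
  by (simp add: qint_def)

lemma qint_eq: "qint q n = (q ^ n - 1) / (q - 1)"
  unfolding qint_def by (metis minus_diff_eq minus_divide_divide)

lemma qfact_0 [simp]: "qfact q 0 = 1"
  by (simp add: qfact_def)

lemma qfact_Suc: "qfact q (Suc n) = qfact q n * qint q (Suc n)"
  by (simp add: qfact_def prod.cl_ivl_Suc)

lemma qint_Suc_neq_0: "0 < q \<Longrightarrow> q < 1 \<Longrightarrow> qint q (Suc n) \<noteq> 0"
  unfolding qint_def using power_less_one_iff[of q "Suc n"] by auto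

lemma qint_split:
  assumes "q \<noteq> 1" "j \<le> n"
  shows "q ^ j * qint q (n - j) + q ^ n * qint q j = qint q n * q ^ j"
proof -
  have "q ^ n = q ^ j * q ^ (n - j)"
    using assms(2) by (simp flip: power_add)
  then have "q ^ j * (1 - q ^ (n - j)) + q ^ n * (1 - q ^ j) = (1 - q ^ n) * q ^ j"
    by (simp add: algebra_simps)
  then show ?thesis
    using assms(1) unfolding qint_def by (simp add: divide_simps)
qed

lemma powser_sums_zero_imp_coeff_zero:
  fixes c :: "nat \<Rightarrow> real"
  assumes "0 < s" and "\<And>t. t \<noteq> 0 \<Longrightarrow> \<bar>t\<bar> < s \<Longrightarrow> (\<lambda>n. c n * t ^ n) sums 0"
  shows "c k = 0"
proof -
  have head: "c 0 = 0"
    if "\<And>t. t \<noteq> 0 \<Longrightarrow> \<bar>t\<bar> < s \<Longrightarrow> (\<lambda>n. c n * t ^ n) sums 0" for c :: "nat \<Rightarrow> real"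
  proof -
    have "((\<lambda>_. 0) \<longlongrightarrow> c 0) (at (0::real))"
      by (rule powser_limit_0_strong[OF \<open>0 < s\<close>]) (use that in auto)
    then show ?thesis
      using LIM_unique tendsto_const by blast
  qed
  from assms(2) show ?thesis
  proof (induction k arbitrary: c)
    case 0
    then show ?case using head by blast
  next
    case (Suc k)
    have "(\<lambda>n. c (Suc n) * t ^ n) sums 0" if "t \<noteq> 0" "\<bar>t\<bar> < s" for t
    proof -
      have "(\<lambda>n. c (Suc n) * t ^ Suc n) sums 0"
        using Suc.prems[OF that] head[OF Suc.prems] by (subst sums_Suc_iff) simp
      from sums_divide[OF this, of t] show ?thesis
        using that by simp
    qed
    from Suc.IH[OF this] show ?case by simp
  qed
qed

lemma qD_polynomial:
  assumes "q \<noteq> 1"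
  shows "qD q (\<lambda>x. \<Sum>j\<le>Suc m. e j * x ^ j) x = (\<Sum>j\<le>m. qint q (Suc j) * e (Suc j) * x ^ j)"
proof (cases "x = 0")
  case True
  have "((\<lambda>x. \<Sum>j\<le>Suc m. e j * x ^ j) has_field_derivative
          (\<Sum>j\<le>Suc m. e j * (real j * 0 ^ (j - Suc 0)))) (at 0)"
    by (intro DERIV_sum DERIV_cmult DERIV_pow)
  moreover have "(\<Sum>j\<le>Suc m. e j * (real j * 0 ^ (j - Suc 0))) = e 1"
    by (cases m) (simp_all add: sum.atMost_Suc_shift del: sum.atMost_Suc)
  ultimately show ?thesis
    using True assms by (simp add: DERIV_imp_deriv qD_def qint_def sum.atMost_Suc_shift del: sum.atMost_Suc)
next
  case False
  have "qD q (\<lambda>x. \<Sum>j\<le>Suc m. e j * x ^ j) x = (\<Sum>j\<le>Suc m. e j * ((q * x) ^ j - x ^ j) / ((q - 1) * x))"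
    using False by (simp add: qD_def sum_divide_distrib[symmetric] right_diff_distrib sum_subtractf
        del: sum.atMost_Suc)
  also have "\<dots> = (\<Sum>j\<le>m. e (Suc j) * ((q * x) ^ Suc j - x ^ Suc j) / ((q - 1) * x))"
    by (subst sum.atMost_Suc_shift) simp
  also have "\<dots> = (\<Sum>j\<le>m. qint q (Suc j) * e (Suc j) * x ^ j)"
  proof (rule sum.cong[OF refl])
    fix j
    have "(q * x) ^ Suc j - x ^ Suc j = x * x ^ j * (q ^ Suc j - 1)"
      by (simp add: power_mult_distrib algebra_simps)
    then show "e (Suc j) * ((q * x) ^ Suc j - x ^ Suc j) / ((q - 1) * x) = qint q (Suc j) * e (Suc j) * x ^ j"
      using False assms unfolding qint_def by (simp add: field_simps)
  qed
  finally show ?thesis .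
qed

text \<open>The coefficient of t^m in (\<Sum> b_n t^n) e_q(tx); for b_n = a_n/[n]_q! it is A_{m,q}(x)/[m]_q!.\<close>
definition qAppell_coeff :: "real \<Rightarrow> (nat \<Rightarrow> real) \<Rightarrow> nat \<Rightarrow> real \<Rightarrow> real" where
  "qAppell_coeff q b m x = (\<Sum>j\<le>m. b (m - j) * x ^ j / qfact q j)"

lemma qAppell_eq_qAppell_coeff:
  "qAppell q a n = qAppell_coeff q (\<lambda>j. qfact q n * (a j / qfact q j)) n"
proof
  fix x
  have "(\<Sum>k\<le>n. a k / qfact q k * (x ^ (n - k) / qfact q (n - k)))
      = (\<Sum>j\<le>n. a (n - j) / qfact q (n - j) * (x ^ j / qfact q j))"
    by (rule sum.reindex_bij_witness[of _ "\<lambda>j. n - j" "\<lambda>k. n - k"]) auto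
  then show "qAppell q a n x = qAppell_coeff q (\<lambda>j. qfact q n * (a j / qfact q j)) n x"
    by (simp add: qAppell_def qAppell_coeff_def sum_distrib_left mult_ac)
qed

lemma qD_qAppell_coeff:
  assumes "0 < q" "q < 1"
  shows "qD q (qAppell_coeff q b (Suc m)) = qAppell_coeff q b m"
proof
  fix x
  have "qAppell_coeff q b (Suc m) = (\<lambda>x. \<Sum>j\<le>Suc m. b (Suc m - j) / qfact q j * x ^ j)"
    by (simp add: qAppell_coeff_def fun_eq_iff del: sum.atMost_Suc)
  then have "qD q (qAppell_coeff q b (Suc m)) x
      = (\<Sum>j\<le>m. qint q (Suc j) * (b (Suc m - Suc j) / qfact q (Suc j)) * x ^ j)"
    using assms by (simp only: qD_polynomial)
  also have "\<dots> = qAppell_coeff q b m x"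
    using qint_Suc_neq_0[OF assms] by (simp add: qAppell_coeff_def qfact_Suc)
  finally show "qD q (qAppell_coeff q b (Suc m)) x = qAppell_coeff q b m x" .
qed

lemma funpow_qD_qAppell_coeff:
  assumes "0 < q" "q < 1" "k \<le> m"
  shows "(qD q ^^ k) (qAppell_coeff q b m) = qAppell_coeff q b (m - k)"
  using assms(3)
proof (induction k)
  case 0
  then show ?case by simp
next
  case (Suc k)
  then have "m - k = Suc (m - Suc k)" by simp
  with Suc show ?case
    using qD_qAppell_coeff[OF assms(1,2)] by simp
qed

lemma sum_atMost_triangle_swap:
  fixes g :: "nat \<Rightarrow> nat \<Rightarrow> 'a::comm_monoid_add"
  shows "(\<Sum>i\<le>n. \<Sum>j\<le>n - i. g i j) = (\<Sum>j\<le>n. \<Sum>i\<le>n - j. g i j)"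
proof -
  have "(\<Sum>i\<le>n. \<Sum>j\<le>n - i. g i j) = (\<Sum>(i, j)\<in>{(i, j). i + j \<le> n}. g i j)"
    by (simp add: pairs_le_eq_Sigma sum.Sigma)
  also have "\<dots> = (\<Sum>(j, i)\<in>{(j, i). j + i \<le> n}. g i j)"
    by (rule sum.reindex_bij_witness[of _ prod.swap prod.swap]) auto
  also have "\<dots> = (\<Sum>j\<le>n. \<Sum>i\<le>n - j. g i j)"
    by (simp add: pairs_le_eq_Sigma sum.Sigma)
  finally show ?thesis .
qed

lemma sum_qAppell_coeff_convolution:
  "(\<Sum>k\<le>n. q ^ (n - k) * c k * qAppell_coeff q b (n - k) x)
     = (\<Sum>j\<le>n. x ^ j / qfact q j * q ^ j * (\<Sum>k\<le>n - j. c k * q ^ (n - j - k) * b (n - j - k)))"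
proof -
  have "(\<Sum>k\<le>n. q ^ (n - k) * c k * qAppell_coeff q b (n - k) x)
      = (\<Sum>k\<le>n. \<Sum>j\<le>n - k. x ^ j / qfact q j * q ^ j * (c k * q ^ (n - j - k) * b (n - j - k)))"
    unfolding qAppell_coeff_def sum_distrib_left
  proof (intro sum.cong refl)
    fix k j
    assume "k \<in> {..n}" "j \<in> {..n - k}"
    then have "q ^ (n - k) = q ^ j * q ^ (n - j - k)" "n - k - j = n - j - k"
      by (auto simp flip: power_add)
    then show "q ^ (n - k) * c k * (b (n - k - j) * x ^ j / qfact q j)
        = x ^ j / qfact q j * q ^ j * (c k * q ^ (n - j - k) * b (n - j - k))"
      by simp
  qed
  also have "\<dots> = (\<Sum>j\<le>n. x ^ j / qfact q j * q ^ j * (\<Sum>k\<le>n - j. c k * q ^ (n - j - k) * b (n - j - k)))"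
    by (subst sum_atMost_triangle_swap) (simp add: sum_distrib_left)
  finally show ?thesis .
qed

lemma x_mult_qAppell_coeff:
  assumes "0 < q" "q < 1"
  shows "x * qAppell_coeff q b m x = (\<Sum>j\<le>Suc m. x ^ j / qfact q j * (qint q j * b (Suc m - j)))"
proof -
  have "(\<Sum>j\<le>Suc m. x ^ j / qfact q j * (qint q j * b (Suc m - j)))
      = (\<Sum>j\<le>m. x ^ Suc j / qfact q (Suc j) * (qint q (Suc j) * b (m - j)))"
    by (simp add: sum.atMost_Suc_shift del: sum.atMost_Suc)
  also have "\<dots> = (\<Sum>j\<le>m. x * (b (m - j) * x ^ j / qfact q j))"
    using qint_Suc_neq_0[OF assms] by (intro sum.cong refl) (simp add: qfact_Suc)
  also have "\<dots> = x * qAppell_coeff q b m x"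
    by (simp add: qAppell_coeff_def sum_distrib_left)
  finally show ?thesis by (rule sym)
qed

lemma qAppell_coeff_difference_equation:
  fixes b c :: "nat \<Rightarrow> real"
  assumes q: "0 < q" "q < 1"
    and recursion: "\<And>m. (\<Sum>k\<le>m. c k * q ^ (m - k) * b (m - k)) = qint q m * b m"
    and "0 < n"
  shows "(\<Sum>k\<le>n. q ^ (n - k) * c k * qAppell_coeff q b (n - k) x)
         + x * q ^ n * qAppell_coeff q b (n - 1) x - qint q n * qAppell_coeff q b n (q * x) = 0"
proof -
  have "(\<Sum>k\<le>n. q ^ (n - k) * c k * qAppell_coeff q b (n - k) x)
      = (\<Sum>j\<le>n. x ^ j / qfact q j * (q ^ j * qint q (n - j) * b (n - j)))"
    unfolding sum_qAppell_coeff_convolution recursion by (simp add: mult_ac)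
  moreover have "x * q ^ n * qAppell_coeff q b (n - 1) x
      = (\<Sum>j\<le>n. x ^ j / qfact q j * (q ^ n * qint q j * b (n - j)))"
  proof -
    have "x * q ^ n * qAppell_coeff q b (n - 1) x = q ^ n * (x * qAppell_coeff q b (n - 1) x)"
      by (simp only: mult_ac)
    also have "\<dots> = q ^ n * (\<Sum>j\<le>n. x ^ j / qfact q j * (qint q j * b (n - j)))"
      using x_mult_qAppell_coeff[OF q, of x b "n - 1"] \<open>0 < n\<close> by simp
    finally show ?thesis
      by (simp add: sum_distrib_left mult_ac)
  qed
  moreover have "qint q n * qAppell_coeff q b n (q * x)
      = (\<Sum>j\<le>n. x ^ j / qfact q j * (qint q n * q ^ j * b (n - j)))"
    by (simp add: qAppell_coeff_def sum_distrib_left power_mult_distrib mult_ac)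
  moreover have "(\<Sum>j\<le>n. x ^ j / qfact q j * (q ^ j * qint q (n - j) * b (n - j)))
      + (\<Sum>j\<le>n. x ^ j / qfact q j * (q ^ n * qint q j * b (n - j)))
      - (\<Sum>j\<le>n. x ^ j / qfact q j * (qint q n * q ^ j * b (n - j)))
      = (\<Sum>j\<le>n. x ^ j / qfact q j * b (n - j)
                * (q ^ j * qint q (n - j) + q ^ n * qint q j - qint q n * q ^ j))"
    by (simp add: sum.distrib[symmetric] sum_subtractf[symmetric] algebra_simps)
  moreover have "\<dots> = 0"
    using qint_split[of q] q by (intro sum.neutral) auto
  ultimately show ?thesis by simp
qed

lemma eventually_qseries_neq_0:
  assumes "0 < r" and "\<And>t. \<bar>t\<bar> < r \<Longrightarrow> summable (\<lambda>n. a n * t ^ n / qfact q n)" and "a 0 \<noteq> 0"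
  shows "eventually (\<lambda>u. qseries q a u \<noteq> 0) (at 0)"
proof -
  have sums: "(\<lambda>n. a n / qfact q n * t ^ n) sums qseries q a t" if "\<bar>t\<bar> < r" for t
    using summable_sums[OF assms(2)[OF that]] by (simp add: qseries_def)
  have "(qseries q a \<longlongrightarrow> a 0 / qfact q 0) (at 0)"
    by (rule powser_limit_0[OF \<open>0 < r\<close>, of "\<lambda>n. a n / qfact q n"]) (use sums in simp)
  from tendsto_imp_eventually_ne[OF this, of 0] show ?thesis
    using \<open>a 0 \<noteq> 0\<close> by simp
qed

lemma qD_powser_sums:
  assumes "q \<noteq> 1" "t \<noteq> 0"
    and "(\<lambda>n. b n * t ^ n) sums A t" "(\<lambda>n. b n * (q * t) ^ n) sums A (q * t)"
  shows "(\<lambda>n. qint q n * b n * t ^ n) sums (t * qD q A t)"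
proof -
  have "(\<lambda>n. (b n * (q * t) ^ n - b n * t ^ n) / (q - 1)) sums ((A (q * t) - A t) / (q - 1))"
    by (intro sums_divide sums_diff assms)
  moreover have "(A (q * t) - A t) / (q - 1) = t * qD q A t"
    using assms(1,2) by (simp add: qD_def)
  moreover have "(b n * (q * t) ^ n - b n * t ^ n) / (q - 1) = qint q n * b n * t ^ n" for n
    by (simp add: qint_eq power_mult_distrib algebra_simps diff_divide_distrib)
  ultimately show ?thesis by simp
qed

lemma powser_Cauchy_product_dilated_sums:
  fixes b c :: "nat \<Rightarrow> real"
  assumes "summable (\<lambda>n. norm (c n * t ^ n))" "summable (\<lambda>n. norm (b n * (q * t) ^ n))"
  shows "(\<lambda>k. (\<Sum>i\<le>k. c i * q ^ (k - i) * b (k - i)) * t ^ k)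
           sums ((\<Sum>n. c n * t ^ n) * (\<Sum>n. b n * (q * t) ^ n))"
proof -
  have rearrange: "c i * t ^ i * (b (k - i) * (q * t) ^ (k - i)) = c i * q ^ (k - i) * b (k - i) * t ^ k"
    if "i \<le> k" for i k
  proof -
    have "t ^ k = t ^ i * t ^ (k - i)"
      using that by (simp flip: power_add)
    then show ?thesis by (simp add: power_mult_distrib)
  qed
  have "(\<Sum>i\<le>k. c i * t ^ i * (b (k - i) * (q * t) ^ (k - i)))
      = (\<Sum>i\<le>k. c i * q ^ (k - i) * b (k - i)) * t ^ k" for k
    unfolding sum_distrib_right by (rule sum.cong) (auto simp: rearrange)
  with Cauchy_product_sums[OF assms] show ?thesis by simp
qed

lemma qD_eq_mult_dilated_coeffs_sums_0:
  fixes b c :: "nat \<Rightarrow> real"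
  assumes q: "0 < q" "q < 1" and "t \<noteq> 0"
    and b_sums: "(\<lambda>n. b n * t ^ n) sums A t" "(\<lambda>n. b n * (q * t) ^ n) sums A (q * t)"
    and c_sums: "(\<lambda>n. c n * t ^ n) sums (t * qD q A t / A (q * t))" and "A (q * t) \<noteq> 0"
    and c_abs: "summable (\<lambda>n. norm (c n * t ^ n))"
  shows "(\<lambda>k. ((\<Sum>i\<le>k. c i * q ^ (k - i) * b (k - i)) - qint q k * b k) * t ^ k) sums 0"
proof -
  have "\<bar>q * t\<bar> < \<bar>t\<bar>"
    using q \<open>t \<noteq> 0\<close> by (simp add: abs_mult)
  then have "summable (\<lambda>n. norm (b n * (q * t) ^ n))"
    using b_sums(1) by (intro powser_insidea[of _ t]) (auto intro: sums_summable)
  from powser_Cauchy_product_dilated_sums[OF c_abs this]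
  have "(\<lambda>k. (\<Sum>i\<le>k. c i * q ^ (k - i) * b (k - i)) * t ^ k)
      sums ((\<Sum>n. c n * t ^ n) * (\<Sum>n. b n * (q * t) ^ n))" .
  moreover have "(\<Sum>n. c n * t ^ n) * (\<Sum>n. b n * (q * t) ^ n) = t * qD q A t"
    using c_sums b_sums(2) \<open>A (q * t) \<noteq> 0\<close> by (simp add: sums_iff)
  ultimately have "(\<lambda>k. (\<Sum>i\<le>k. c i * q ^ (k - i) * b (k - i)) * t ^ k) sums (t * qD q A t)"
    by simp
  moreover have "(\<lambda>k. qint q k * b k * t ^ k) sums (t * qD q A t)"
    using q \<open>t \<noteq> 0\<close> by (intro qD_powser_sums b_sums) simp_all
  ultimately show ?thesis
    using sums_diff by (fastforce simp: algebra_simps)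
qed

lemma qseries_coeff_recursion:
  fixes q :: real and a alpha :: "nat \<Rightarrow> real"
  assumes q: "0 < q" "q < 1"
    and analytic: "\<exists>r>0. \<forall>t. \<bar>t\<bar> < r \<longrightarrow> summable (\<lambda>n. a n * t ^ n / qfact q n)"
    and a0: "a 0 \<noteq> 0"
    and alpha: "\<exists>r>0. \<forall>t. 0 < \<bar>t\<bar> \<and> \<bar>t\<bar> < r \<longrightarrow>
                  (\<lambda>n. alpha n * t ^ n / qfact q n) sums
                    (t * qD q (qseries q a) t / qseries q a (q * t))"
  shows "(\<Sum>k\<le>m. alpha k / qfact q k * q ^ (m - k) * (a (m - k) / qfact q (m - k)))
           = qint q m * (a m / qfact q m)"
proof -
  define b where "b n = a n / qfact q n" for n
  define c where "c n = alpha n / qfact q n" for n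
  define A where "A = qseries q a"
  obtain r1 where r1: "0 < r1" "\<And>t. \<bar>t\<bar> < r1 \<Longrightarrow> summable (\<lambda>n. a n * t ^ n / qfact q n)"
    using analytic by blast
  obtain r2 where r2: "0 < r2" "\<And>t. 0 < \<bar>t\<bar> \<Longrightarrow> \<bar>t\<bar> < r2 \<Longrightarrow>
      (\<lambda>n. c n * t ^ n) sums (t * qD q A t / A (q * t))"
    using alpha unfolding c_def A_def by (auto simp: mult_ac)
  obtain d where d: "0 < d" "\<And>u. u \<noteq> 0 \<Longrightarrow> \<bar>u\<bar> < d \<Longrightarrow> A u \<noteq> 0"
    using eventually_qseries_neq_0[OF r1 a0] unfolding eventually_at A_def by auto
  have b_sums: "(\<lambda>n. b n * t ^ n) sums A t" if "\<bar>t\<bar> < r1" for t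
    using summable_sums[OF r1(2)[OF that]] by (simp add: A_def qseries_def b_def)
  define s where "s = min (min r1 r2) d"
  have "0 < s"
    using r1 r2 d by (simp add: s_def)
  have difference_sums_0: "(\<lambda>k. ((\<Sum>i\<le>k. c i * q ^ (k - i) * b (k - i)) - qint q k * b k) * t ^ k) sums 0"
    if "t \<noteq> 0" "\<bar>t\<bar> < s" for t
  proof (rule qD_eq_mult_dilated_coeffs_sums_0[OF q \<open>t \<noteq> 0\<close>])
    have qt: "\<bar>q * t\<bar> < \<bar>t\<bar>" "q * t \<noteq> 0"
      using that q by (auto simp: abs_mult)
    then show "(\<lambda>n. b n * t ^ n) sums A t" "(\<lambda>n. b n * (q * t) ^ n) sums A (q * t)"
      "(\<lambda>n. c n * t ^ n) sums (t * qD q A t / A (q * t))" "A (q * t) \<noteq> 0"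
      using that b_sums r2(2) d(2) by (auto simp: s_def)
    define t' where "t' = (\<bar>t\<bar> + s) / 2"
    have t': "\<bar>t\<bar> < \<bar>t'\<bar>" "0 < \<bar>t'\<bar>" "\<bar>t'\<bar> < r2"
      using that by (auto simp: t'_def s_def)
    have "summable (\<lambda>n. c n * t' ^ n)"
      using r2(2)[OF t'(2,3)] by (rule sums_summable)
    then show "summable (\<lambda>n. norm (c n * t ^ n))"
      by (rule powser_insidea) (use t' in simp)
  qed
  from powser_sums_zero_imp_coeff_zero[OF \<open>0 < s\<close> difference_sums_0, of m] show ?thesis
    by (simp add: b_def c_def)
qed

theorem theorem2:
  fixes q :: real and a alpha :: "nat \<Rightarrow> real"
  assumes q: "0 < q" "q < 1"
    and analytic: "\<exists>r>0. \<forall>t. \<bar>t\<bar> < r \<longrightarrow> summable (\<lambda>n. a n * t ^ n / qfact q n)"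
    and a0: "a 0 \<noteq> 0"
    and alpha: "\<exists>r>0. \<forall>t. 0 < \<bar>t\<bar> \<and> \<bar>t\<bar> < r \<longrightarrow>
                  (\<lambda>n. alpha n * t ^ n / qfact q n) sums
                    (t * qD q (qseries q a) t / qseries q a (q * t))"
    and n: "0 < n"
  shows "(\<Sum>k\<le>n. q ^ (n - k) * alpha k / qfact q k * ((qD q ^^ k) (qAppell q a n) x))
         + x * q ^ n * qD q (qAppell q a n) x - qint q n * qAppell q a n (q * x) = 0"
proof -
  define B where "B = (\<lambda>j. qfact q n * (a j / qfact q j))"
  define c where "c k = alpha k / qfact q k" for k
  have recursion: "(\<Sum>k\<le>m. c k * q ^ (m - k) * B (m - k)) = qint q m * B m" for m
    using arg_cong[OF qseries_coeff_recursion[OF q analytic a0 alpha, of m], of "(*) (qfact q n)"]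
    by (simp add: B_def c_def sum_distrib_left mult_ac)
  have derivs: "(qD q ^^ k) (qAppell q a n) = qAppell_coeff q B (n - k)" if "k \<le> n" for k
    unfolding qAppell_eq_qAppell_coeff B_def by (rule funpow_qD_qAppell_coeff[OF q that])
  have "(\<Sum>k\<le>n. q ^ (n - k) * alpha k / qfact q k * ((qD q ^^ k) (qAppell q a n) x))
      = (\<Sum>k\<le>n. q ^ (n - k) * c k * qAppell_coeff q B (n - k) x)"
    by (rule sum.cong) (simp_all add: derivs c_def)
  moreover have "qD q (qAppell q a n) = qAppell_coeff q B (n - 1)"
    using derivs[of 1] n by simp
  moreover have "qAppell q a n = qAppell_coeff q B n"
    using derivs[of 0] by simp
  ultimately show ?thesis
    using qAppell_coeff_difference_equation[OF q recursion n] by simp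
qed

end
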